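(* (i) Let $H$ be a primitive permutation group on a finite set $\Delta$ that is not cyclic of prime order, and let $K\le S_n$ ($n\ge2$) be a transitive group no cyclic subgroup of which is transitive. Then $H\wr K$ in the product action on $\Delta^n$ is a primitive group every element of which is an imprimitive permutation of $\Delta^n$. (ii) Let $m\ge1$ and let $G=S_3\wr C_2^m$ in the product action, where $C_2^m$ acts regularly on $2^m$ points; so $G$ is a primitive group of degree $3^{2^m}$. Then any subgroup of $G$ generated by fewer than $m$ elements preserves a partition of the $3^{2^m}$ points into blocks of equal size $b$ with $1<b<3^{2^m}$; in particular at least $m$ elements are needed to generate a primitive subgroup of $G$.
   Context: For $H\le{\rm Sym}(\Delta)$ and $K\le S_n$, $H\wr K$ in product action acts on $\Delta^n$ by applying $h_i\in H$ to the $i$-th coordinate and permuting coordinates by $\sigma\in K$. A permutation of a set $\Omega$ of size $N$ is imprimitive if it preserves a partition of $\Omega$ into blocks of equal size $b$ with $1<b<N$. *)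

theory Defs
  imports "HOL-Combinatorics.Permutations" "HOL-Library.FuncSet" "HOL-Computational_Algebra.Primes"
begin

definition perm_group :: "'a set \<Rightarrow> ('a \<Rightarrow> 'a) set \<Rightarrow> bool" where
  "perm_group D G \<longleftrightarrow> G \<subseteq> {g. g permutes D} \<and> id \<in> G \<and>
     (\<forall>g\<in>G. \<forall>h\<in>G. g \<circ> h \<in> G) \<and> (\<forall>g\<in>G. inv g \<in> G)"

definition transitive_on :: "'a set \<Rightarrow> ('a \<Rightarrow> 'a) set \<Rightarrow> bool" where
  "transitive_on D G \<longleftrightarrow> (\<forall>x\<in>D. \<forall>y\<in>D. \<exists>g\<in>G. g x = y)"

definition cyc :: "('a \<Rightarrow> 'a) \<Rightarrow> ('a \<Rightarrow> 'a) set" where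
  "cyc g = range (\<lambda>k::nat. g ^^ k)"

inductive_set gen_by :: "('a \<Rightarrow> 'a) set \<Rightarrow> ('a \<Rightarrow> 'a) set" for S where
  gen_id: "id \<in> gen_by S"
| gen_el: "s \<in> S \<Longrightarrow> s \<in> gen_by S"
| gen_comp: "g \<in> gen_by S \<Longrightarrow> h \<in> gen_by S \<Longrightarrow> g \<circ> h \<in> gen_by S"
| gen_inv: "g \<in> gen_by S \<Longrightarrow> inv g \<in> gen_by S"

definition is_partition :: "'a set \<Rightarrow> 'a set set \<Rightarrow> bool" where
  "is_partition D P \<longleftrightarrow> \<Union>P = D \<and> {} \<notin> P \<and> (\<forall>B\<in>P. \<forall>C\<in>P. B \<noteq> C \<longrightarrow> B \<inter> C = {})"

definition preserves :: "('a \<Rightarrow> 'a) set \<Rightarrow> 'a set set \<Rightarrow> bool" where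
  "preserves G P \<longleftrightarrow> (\<forall>g\<in>G. \<forall>B\<in>P. g ` B \<in> P)"

definition preserves_nontrivial_partition :: "'a set \<Rightarrow> ('a \<Rightarrow> 'a) set \<Rightarrow> bool" where
  "preserves_nontrivial_partition D G \<longleftrightarrow>
     (\<exists>P b. is_partition D P \<and> (\<forall>B\<in>P. card B = b) \<and> 1 < b \<and> b < card D \<and> preserves G P)"

definition imprimitive_perm :: "'a set \<Rightarrow> ('a \<Rightarrow> 'a) \<Rightarrow> bool" where
  "imprimitive_perm D g \<longleftrightarrow> preserves_nontrivial_partition D {g}"

definition primitive :: "'a set \<Rightarrow> ('a \<Rightarrow> 'a) set \<Rightarrow> bool" where
  "primitive D G \<longleftrightarrow> finite D \<and> 2 \<le> card D \<and> perm_group D G \<and> transitive_on D G \<and>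
     (\<forall>P. is_partition D P \<and> preserves G P \<longrightarrow> P = {D} \<or> (\<forall>B\<in>P. card B = 1))"

definition prod_dom :: "'a set \<Rightarrow> nat \<Rightarrow> (nat \<Rightarrow> 'a) set" where
  "prod_dom D n = PiE {0..<n} (\<lambda>_. D)"

text \<open>The element (h_0,...,h_{n-1}; sigma): apply h_i to coordinate i and move it to
  position sigma(i).\<close>
definition wr_elem :: "'a set \<Rightarrow> nat \<Rightarrow> (nat \<Rightarrow> 'a \<Rightarrow> 'a) \<Rightarrow> (nat \<Rightarrow> nat)
    \<Rightarrow> (nat \<Rightarrow> 'a) \<Rightarrow> (nat \<Rightarrow> 'a)" where
  "wr_elem D n h \<sigma> = (\<lambda>x. if x \<in> prod_dom D n
      then (\<lambda>j\<in>{0..<n}. h (inv \<sigma> j) (x (inv \<sigma> j))) else x)"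

definition wr_prod :: "'a set \<Rightarrow> ('a \<Rightarrow> 'a) set \<Rightarrow> (nat \<Rightarrow> nat) set \<Rightarrow> nat
    \<Rightarrow> ((nat \<Rightarrow> 'a) \<Rightarrow> (nat \<Rightarrow> 'a)) set" where
  "wr_prod D H K n = {wr_elem D n h \<sigma> | h \<sigma>. (\<forall>i<n. h i \<in> H) \<and> \<sigma> \<in> K}"

text \<open>S_3 on {0,1,2}, and C_2^m acting regularly on {0..<2^m} by bitwise xor.\<close>
definition S3 :: "(nat \<Rightarrow> nat) set" where
  "S3 = {f. f permutes {0..<3}}"

definition C2pow :: "nat \<Rightarrow> (nat \<Rightarrow> nat) set" where
  "C2pow m = {(\<lambda>i. if i < 2^m then xor i v else i) | v. v < 2^m}"

end

theory Submission
  imports Defs "HOL-Library.Disjoint_Sets" "HOL-Combinatorics.Orbits" "HOL-Combinatorics.Cycles"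
begin

text \<open>
  (i) Let \<open>R\<close> be an equivalence relation on \<open>\<Delta>\<^sup>n\<close> invariant under \<open>H wr K\<close> relating two distinct
  points \<open>x\<close>, \<open>y\<close>, say with \<open>x\<^sub>i \<noteq> y\<^sub>i\<close>. A primitive group that is not cyclic of prime order is
  not semiregular, and then the stabiliser of \<open>x\<^sub>i\<close> moves \<open>y\<^sub>i\<close>; acting with it in coordinate \<open>i\<close>
  relates \<open>y\<close> to a point differing from \<open>y\<close> only in coordinate \<open>i\<close>. Primitivity of \<open>H\<close> then makes
  \<open>R\<close> relate all points that differ only in coordinate \<open>i\<close>, the base group transports this to
  every point and the transitive group \<open>K\<close> to every coordinate, so \<open>R\<close> is universal.
  Conversely, for an element \<open>(h; \<sigma>)\<close> let \<open>I\<close> be the \<open>\<sigma>\<close>-orbit of a coordinate; it is a proper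
  subset because no cyclic subgroup of \<open>K\<close> is transitive, and \<open>(h; \<sigma>)\<close> permutes the fibres of
  the projection \<open>\<Delta>\<^sup>n \<rightarrow> \<Delta>\<^sup>I\<close>.

  (ii) The top components of fewer than \<open>m\<close> generators span a subspace \<open>I\<close> of \<open>C\<^sub>2\<^sup>m = F\<^sub>2\<^sup>m\<close>
  with fewer than \<open>2\<^sup>m\<close> elements. Every element of the generated group has its top component in
  the setwise stabiliser of \<open>I\<close>, so it permutes the fibres of the projection onto the coordinates in \<open>I\<close>.
\<close>

lemma
  assumes "perm_group D G"
  shows perm_group_permutes: "g \<in> G \<Longrightarrow> g permutes D"
    and perm_group_id: "id \<in> G"
    and perm_group_comp: "g \<in> G \<Longrightarrow> h \<in> G \<Longrightarrow> g \<circ> h \<in> G"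
    and perm_group_inv: "g \<in> G \<Longrightarrow> inv g \<in> G"
  using assms unfolding perm_group_def by auto

lemma perm_group_funpow: "perm_group D G \<Longrightarrow> g \<in> G \<Longrightarrow> g ^^ k \<in> G"
  by (induction k) (auto simp: perm_group_def)

lemma finite_perm_group: "perm_group D G \<Longrightarrow> finite D \<Longrightarrow> finite G"
  by (rule finite_subset[OF _ finite_permutations[of D]]) (auto simp: perm_group_def)

lemma perm_group_permutations: "perm_group D {f. f permutes D}"
  unfolding perm_group_def by (auto intro: permutes_compose permutes_inv)

lemma gen_by_least:
  assumes "perm_group D G" "S \<subseteq> G"
  shows "gen_by S \<subseteq> G"
proof
  fix g assume "g \<in> gen_by S"
  then show "g \<in> G"
    by (induction rule: gen_by.induct) (use assms perm_group_id perm_group_comp perm_group_inv in blast)+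
qed

lemma is_partition_iff_partition_on: "is_partition D P \<longleftrightarrow> partition_on D P"
  by (auto simp: is_partition_def partition_on_def disjoint_def)

definition invariant_rel :: "('a \<Rightarrow> 'a) set \<Rightarrow> 'a rel \<Rightarrow> bool" where
  "invariant_rel G R \<longleftrightarrow> (\<forall>g\<in>G. \<forall>(x, y)\<in>R. (g x, g y) \<in> R)"

lemma invariant_relD: "invariant_rel G R \<Longrightarrow> g \<in> G \<Longrightarrow> (x, y) \<in> R \<Longrightarrow> (g x, g y) \<in> R"
  by (auto simp: invariant_rel_def)

lemma image_equiv_class:
  assumes "perm_group D G" "invariant_rel G R" "g \<in> G"
  shows "g ` (R `` {x}) = R `` {g x}"
proof
  show "g ` (R `` {x}) \<subseteq> R `` {g x}"
    using assms(2,3) by (auto dest: invariant_relD)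
  show "R `` {g x} \<subseteq> g ` (R `` {x})"
  proof
    fix y assume "y \<in> R `` {g x}"
    have g: "g permutes D" using assms perm_group_permutes by blast
    have "(inv g (g x), inv g y) \<in> R"
      using assms \<open>y \<in> R `` {g x}\<close> by (auto intro: invariant_relD perm_group_inv)
    then have "inv g y \<in> R `` {x}" by (simp add: permutes_inverses[OF g])
    then show "y \<in> g ` (R `` {x})"
      using image_eqI[of y g "inv g y"] by (simp add: permutes_inverses[OF g])
  qed
qed

lemma primitive_invariant_equiv:
  assumes prim: "primitive D G" and R: "equiv D R" "invariant_rel G R"
  shows "R = D \<times> D \<or> R = Id_on D"
proof -
  have pg: "perm_group D G" using prim by (simp add: primitive_def)
  have "g ` (R `` {x}) \<in> D // R" if "g \<in> G" "x \<in> D" for g x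
    using that image_equiv_class[OF pg R(2)] perm_group_permutes[OF pg]
    by (simp add: quotientI permutes_in_image)
  then have "preserves G (D // R)"
    unfolding preserves_def quotient_def by blast
  then have "D // R = {D} \<or> (\<forall>B \<in> D // R. card B = 1)"
    using prim partition_on_quotient[OF R(1)] unfolding primitive_def is_partition_iff_partition_on by blast
  then show ?thesis
  proof
    assume "D // R = {D}"
    then have "R `` {x} = D" if "x \<in> D" for x
      using that quotientI[of x D R] by simp
    then have "(a, b) \<in> R \<longleftrightarrow> a \<in> D \<and> b \<in> D" for a b
      using equiv_type[OF R(1)] by blast
    then have "R = D \<times> D" by auto
    then show ?thesis ..
  next
    assume singletons: "\<forall>B \<in> D // R. card B = 1"
    have "R `` {x} = {x}" if x: "x \<in> D" for x
    proof -
      obtain z where "R `` {x} = {z}"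
        using singletons quotientI[OF x] card_1_singletonE by metis
      then show ?thesis using equiv_class_self[OF R(1) x] by simp
    qed
    then have "(a, b) \<in> R \<longleftrightarrow> a \<in> D \<and> b = a" for a b
      using equiv_type[OF R(1)] equiv_class_self[OF R(1)] by blast
    then have "R = Id_on D" by (auto simp: Id_on_iff)
    then show ?thesis ..
  qed
qed

lemma primitiveI:
  assumes "finite D" "2 \<le> card D" "perm_group D G" "transitive_on D G"
    and trivial: "\<And>R. equiv D R \<Longrightarrow> invariant_rel G R \<Longrightarrow> R = D \<times> D \<or> R = Id_on D"
  shows "primitive D G"
proof -
  have "P = {D} \<or> (\<forall>B\<in>P. card B = 1)" if "is_partition D P" "preserves G P" for P
  proof -
    have P: "partition_on D P" using that(1) by (simp add: is_partition_iff_partition_on)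
    define R where "R = {(x, y). \<exists>B\<in>P. x \<in> B \<and> y \<in> B}"
    have "invariant_rel G R"
      unfolding invariant_rel_def R_def
    proof clarify
      fix g x y B assume "g \<in> G" "B \<in> P" "x \<in> B" "y \<in> B"
      then show "\<exists>C\<in>P. g x \<in> C \<and> g y \<in> C"
        using that(2) by (auto simp: preserves_def)
    qed
    then have "R = D \<times> D \<or> R = Id_on D"
      by (rule trivial[OF equiv_partition_on[OF P, folded R_def]])
    moreover have "D \<noteq> {}" using assms(2) by auto
    ultimately have "D // R = {D} \<or> D // R = (\<lambda>x. {x}) ` D"
      unfolding quotient_def by (elim disjE) auto
    then show ?thesis
      using partition_on_eq_quotient[OF P, folded R_def] by auto
  qed
  then show ?thesis using assms unfolding primitive_def by blast
qed

definition semiregular :: "'a set \<Rightarrow> ('a \<Rightarrow> 'a) set \<Rightarrow> bool" where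
  "semiregular D G \<longleftrightarrow> (\<forall>x\<in>D. \<forall>g\<in>G. g x = x \<longrightarrow> g = id)"

lemma semiregular_eqI:
  assumes G: "perm_group D G" "semiregular D G" and ab: "a \<in> G" "b \<in> G" and "x \<in> D" "a x = b x"
  shows "a = b"
proof -
  have b: "b permutes D" using G ab perm_group_permutes by blast
  have "inv b \<circ> a \<in> G" "(inv b \<circ> a) x = x"
    using assms by (auto intro: perm_group_comp perm_group_inv simp: permutes_inverses[OF b])
  then have "inv b \<circ> a = id" using G(2) \<open>x \<in> D\<close> by (auto simp: semiregular_def)
  then have "b \<circ> (inv b \<circ> a) = b" by simp
  then show "a = b" by (simp add: o_assoc permutes_inv_o(1)[OF b])
qed

text \<open>The classes of this relation are the images \<open>a L d\<close> of the point \<open>d\<close> under the left cosets of \<open>L\<close>.\<close>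

definition coset_rel :: "('a \<Rightarrow> 'a) set \<Rightarrow> ('a \<Rightarrow> 'a) set \<Rightarrow> 'a \<Rightarrow> 'a rel" where
  "coset_rel H L d = {(x, y). \<exists>a\<in>H. \<exists>l\<in>L. x = a d \<and> y = a (l d)}"

lemma invariant_coset_rel:
  assumes "perm_group D H"
  shows "invariant_rel H (coset_rel H L d)"
  unfolding invariant_rel_def coset_rel_def
proof clarify
  fix h a l assume "h \<in> H" "a \<in> H" "l \<in> L"
  then show "\<exists>b\<in>H. \<exists>l'\<in>L. h (a d) = b d \<and> h (a (l d)) = b (l' d)"
    by (intro bexI[of _ "h \<circ> a"] bexI[of _ l]) (auto intro: perm_group_comp[OF assms])
qed

lemma equiv_coset_rel:
  assumes H: "perm_group D H" "transitive_on D H" "semiregular D H"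
    and L: "perm_group D L" "L \<subseteq> H" and d: "d \<in> D"
  shows "equiv D (coset_rel H L d)"
proof (rule equivI)
  let ?R = "coset_rel H L d"
  have inD: "a x \<in> D" if "a \<in> H" "x \<in> D" for a x
    using perm_group_permutes[OF H(1) that(1)] that(2) by (simp add: permutes_in_image)
  show "?R \<subseteq> D \<times> D" using L(2) d inD unfolding coset_rel_def by blast
  show "refl_on D ?R"
  proof
    fix x assume "x \<in> D"
    then obtain a where "a \<in> H" "a d = x" using H(2) d by (auto simp: transitive_on_def)
    moreover have "(a d, a (id d)) \<in> ?R"
      unfolding coset_rel_def using \<open>a \<in> H\<close> perm_group_id[OF L(1)] by blast
    ultimately show "(x, x) \<in> ?R" by simp
  qed
  show "sym ?R"
  proof
    fix x y assume "(x, y) \<in> ?R"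
    then obtain a l where al: "a \<in> H" "l \<in> L" "x = a d" "y = a (l d)" unfolding coset_rel_def by blast
    have l: "l permutes D" using perm_group_permutes[OF L(1) al(2)] .
    have "y = (a \<circ> l) d" "x = (a \<circ> l) (inv l d)"
      using al(3,4) by (simp_all add: permutes_inverses[OF l])
    moreover have "a \<circ> l \<in> H" "inv l \<in> L"
      using al L by (auto intro: perm_group_comp[OF H(1)] perm_group_inv[OF L(1)])
    ultimately show "(y, x) \<in> ?R" unfolding coset_rel_def by blast
  qed
  show "trans ?R"
  proof
    fix x y z assume "(x, y) \<in> ?R" "(y, z) \<in> ?R"
    then obtain a l b l' where al: "a \<in> H" "l \<in> L" "x = a d" "y = a (l d)"
      and bl: "b \<in> H" "l' \<in> L" "y = b d" "z = b (l' d)" unfolding coset_rel_def by blast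
    have "a \<circ> l \<in> H" using al L(2) perm_group_comp[OF H(1)] by blast
    then have "a \<circ> l = b" using semiregular_eqI[OF H(1,3) _ bl(1) d] al bl by simp
    then have "z = a ((l \<circ> l') d)" using bl(4) by auto
    moreover have "l \<circ> l' \<in> L" using al(2) bl(2) perm_group_comp[OF L(1)] by blast
    ultimately show "(x, z) \<in> ?R" using al(1,3) unfolding coset_rel_def by blast
  qed
qed

lemma primitive_semiregular_subgroup:
  assumes prim: "primitive D H" and reg: "semiregular D H"
    and L: "perm_group D L" "L \<subseteq> H"
  shows "L = {id} \<or> L = H"
proof -
  have H: "perm_group D H" "transitive_on D H" and "D \<noteq> {}"
    using prim by (auto simp: primitive_def)
  then obtain d where d: "d \<in> D" by blast
  have same: "a = b" if "a \<in> H" "b \<in> H" "a d = b d" for a b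
    using semiregular_eqI[OF H(1) reg that(1,2) d that(3)] .
  let ?R = "coset_rel H L d"
  have "?R = D \<times> D \<or> ?R = Id_on D"
    using primitive_invariant_equiv[OF prim equiv_coset_rel[OF H reg L d] invariant_coset_rel[OF H(1)]] .
  then show ?thesis
  proof
    assume "?R = D \<times> D"
    have "h \<in> L" if h: "h \<in> H" for h
    proof -
      have "h d \<in> D" using perm_group_permutes[OF H(1) h] d by (simp add: permutes_in_image)
      then have "(d, h d) \<in> ?R" using \<open>?R = D \<times> D\<close> d by blast
      then obtain a l where al: "a \<in> H" "l \<in> L" "d = a d" "h d = a (l d)"
        unfolding coset_rel_def by blast
      have "a = id" using same[OF al(1) perm_group_id[OF H(1)]] al(3) by simp
      then have "h = l" using same[OF h] L(2) al(2,4) by auto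
      then show ?thesis using al(2) by simp
    qed
    then show ?thesis using L(2) by blast
  next
    assume "?R = Id_on D"
    have "l = id" if l: "l \<in> L" for l
    proof -
      have "(id d, id (l d)) \<in> ?R" unfolding coset_rel_def using l perm_group_id[OF H(1)] by blast
      then have "l d = id d" using \<open>?R = Id_on D\<close> by (auto simp: Id_on_iff)
      then show ?thesis using same L(2) l perm_group_id[OF H(1)] by blast
    qed
    then show ?thesis using perm_group_id[OF L(1)] by blast
  qed
qed

lemma perm_group_cyc:
  assumes G: "perm_group D G" "finite D" and g: "g \<in> G"
  shows "perm_group D (cyc g)"
  unfolding perm_group_def
proof (intro conjI ballI subsetI)
  have gD: "g permutes D" using perm_group_permutes[OF G(1) g] .
  have "permutation g" using G(2) gD permutation_permutes by blast
  then obtain r where r: "g ^^ r = id" "0 < r" by (rule permutation_is_nilpotent)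
  show "f \<in> {f. f permutes D}" if "f \<in> cyc g" for f
    using that permutes_funpow[OF gD] by (auto simp: cyc_def)
  show "id \<in> cyc g" unfolding cyc_def using range_eqI[of id "\<lambda>k. g ^^ k" 0] by simp
  show "f \<circ> f' \<in> cyc g" if "f \<in> cyc g" "f' \<in> cyc g" for f f'
  proof -
    obtain k k' where "f = g ^^ k" "f' = g ^^ k'" using \<open>f \<in> cyc g\<close> \<open>f' \<in> cyc g\<close> by (auto simp: cyc_def)
    then have "f \<circ> f' = g ^^ (k + k')" by (simp add: funpow_add)
    then show ?thesis by (simp add: cyc_def)
  qed
  show "inv f \<in> cyc g" if f: "f \<in> cyc g" for f
  proof -
    obtain k where k: "f = g ^^ k" using f by (auto simp: cyc_def)
    have "r * k - k + k = r * k" using r(2) by simp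
    then have "g ^^ (r * k - k) \<circ> g ^^ k = g ^^ (r * k)" by (metis funpow_add)
    also have "\<dots> = id" by (metis funpow_mult id_funpow r(1))
    finally have "g ^^ (r * k - k) \<circ> g ^^ k = id" .
    moreover from this have "g ^^ k \<circ> g ^^ (r * k - k) = id"
      by (metis funpow_add add.commute)
    ultimately have "inv f = g ^^ (r * k - k)" unfolding k by (rule inv_unique_comp[rotated])
    then show ?thesis by (simp add: cyc_def)
  qed
qed

lemma cyc_eq_image_lessThan:
  assumes "g ^^ r = id" "0 < r"
  shows "cyc g = (\<lambda>k. g ^^ k) ` {..<r}"
proof -
  have "g ^^ k = g ^^ (k mod r)" for k
    using funpow_mod_eq[where f = g and n = r] assms(1) by (simp add: fun_eq_iff)
  then have "g ^^ k \<in> (\<lambda>k. g ^^ k) ` {..<r}" for k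
    using assms(2) by (metis image_eqI lessThan_iff mod_less_divisor)
  then show ?thesis by (auto simp: cyc_def)
qed

lemma card_cyc_le:
  assumes "g ^^ r = id" "0 < r"
  shows "card (cyc g) \<le> r"
  unfolding cyc_eq_image_lessThan[OF assms] using card_image_le[of "{..<r}"] by simp

lemma card_cyc_order:
  assumes "inj g" "g ^^ r = id" "0 < r" and least: "\<And>k. 0 < k \<Longrightarrow> k < r \<Longrightarrow> g ^^ k \<noteq> id"
  shows "card (cyc g) = r"
proof -
  have "inj_on (\<lambda>k. g ^^ k) {..<r}"
  proof (rule linorder_inj_onI')
    fix a b assume "a \<in> {..<r}" "b \<in> {..<r}" "a < b"
    show "g ^^ a \<noteq> g ^^ b"
    proof
      assume eq: "g ^^ a = g ^^ b"
      have "g ^^ (b - a) = id"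
      using funpow_diff[OF assms(1), of a b] eq \<open>a < b\<close> by (simp add: fun_eq_iff)
      moreover have "0 < b - a" "b - a < r" using \<open>a < b\<close> \<open>b \<in> {..<r}\<close> by auto
      ultimately show False using least by blast
    qed
  qed
  then show ?thesis unfolding cyc_eq_image_lessThan[OF assms(2,3)] by (simp add: card_image)
qed

lemma two_le_card_obtain:
  assumes "finite D" "2 \<le> card D"
  obtains x y where "x \<in> D" "y \<in> D" "x \<noteq> y"
  using card_le_Suc0_iff_eq[OF assms(1)] assms(2) by force

lemma prime_card_cyc:
  assumes g: "g permutes D" "finite D" "g \<noteq> id"
    and generates: "\<And>k. g ^^ k \<noteq> id \<Longrightarrow> cyc (g ^^ k) = cyc g"
  shows "prime (card (cyc g))"
proof -
  have "permutation g" using g(1,2) permutation_permutes by blast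
  then have "\<exists>r. 0 < r \<and> g ^^ r = id" by (metis permutation_is_nilpotent)
  define r where "r = (LEAST r. 0 < r \<and> g ^^ r = id)"
  have r: "0 < r" "g ^^ r = id" using LeastI_ex[OF \<open>\<exists>r. _\<close>] unfolding r_def by auto
  have least: "g ^^ k \<noteq> id" if "0 < k" "k < r" for k
    using not_less_Least[of k "\<lambda>r. 0 < r \<and> g ^^ r = id"] that unfolding r_def by blast
  have card: "card (cyc g) = r" using card_cyc_order[OF permutes_inj[OF g(1)] r(2,1) least] .
  have "prime r"
    unfolding prime_nat_iff
  proof (intro conjI allI impI)
    show "1 < r" using r g(3) by (cases "r = 1") auto
    fix a assume "a dvd r"
    show "a = 1 \<or> a = r"
    proof (rule ccontr)
      assume "\<not> (a = 1 \<or> a = r)"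
      with \<open>a dvd r\<close> r(1) have a: "1 < a" "a < r" "0 < r div a"
        by (auto simp: dvd_imp_le dvd_div_eq_0_iff intro: dvd_pos_nat)
      then have "cyc (g ^^ a) = cyc g" using least generates by simp
      moreover have "(g ^^ a) ^^ (r div a) = id"
        using r(2) \<open>a dvd r\<close> by (simp add: funpow_mult)
      ultimately have "card (cyc g) \<le> r div a" using card_cyc_le a(3) by fastforce
      then show False using card div_less_dividend[OF a(1) r(1)] by simp
    qed
  qed
  then show ?thesis using card by simp
qed

lemma primitive_semiregular_prime_cyclic:
  assumes prim: "primitive D H" and reg: "semiregular D H"
  shows "\<exists>g\<in>H. H = cyc g \<and> prime (card H)"
proof -
  have H: "perm_group D H" "transitive_on D H" "finite D" "2 \<le> card D"
    using prim by (auto simp: primitive_def)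
  have generates: "cyc f = H" if "f \<in> H" "f \<noteq> id" for f
  proof -
    have "cyc f \<subseteq> H" using perm_group_funpow[OF H(1) that(1)] by (auto simp: cyc_def)
    moreover have "f \<in> cyc f" unfolding cyc_def using range_eqI[of f "\<lambda>k. f ^^ k" 1] by simp
    ultimately show ?thesis
      using primitive_semiregular_subgroup[OF prim reg perm_group_cyc[OF H(1,3) that(1)]] that(2) by blast
  qed
  obtain x y where xy: "x \<in> D" "y \<in> D" "x \<noteq> y" using two_le_card_obtain[OF H(3,4)] .
  then obtain g where g: "g \<in> H" "g x = y" using H(2) by (auto simp: transitive_on_def)
  then have "g \<noteq> id" using xy(3) by auto
  then have "H = cyc g" using generates g(1) by simp
  moreover have "prime (card (cyc g))"
    using perm_group_permutes[OF H(1) g(1)] H(3) \<open>g \<noteq> id\<close>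
  proof (rule prime_card_cyc)
    show "cyc (g ^^ k) = cyc g" if "g ^^ k \<noteq> id" for k
      using generates[OF perm_group_funpow[OF H(1) g(1)] that] \<open>H = cyc g\<close> by simp
  qed
  ultimately show ?thesis using g(1) by auto
qed

definition stabilizer :: "('a \<Rightarrow> 'a) set \<Rightarrow> 'a \<Rightarrow> ('a \<Rightarrow> 'a) set" where
  "stabilizer G x = {g \<in> G. g x = x}"

lemma stabilizer_conj:
  assumes G: "perm_group D G" and h: "h \<in> G"
  shows "stabilizer G (h x) = (\<lambda>g. h \<circ> g \<circ> inv h) ` stabilizer G x"
proof
  have hD: "h permutes D" using perm_group_permutes[OF G h] .
  show "(\<lambda>g. h \<circ> g \<circ> inv h) ` stabilizer G x \<subseteq> stabilizer G (h x)"
    using h by (auto simp: stabilizer_def permutes_inverses[OF hD]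
        intro: perm_group_comp[OF G] perm_group_inv[OF G])
  show "stabilizer G (h x) \<subseteq> (\<lambda>g. h \<circ> g \<circ> inv h) ` stabilizer G x"
  proof
    fix g assume "g \<in> stabilizer G (h x)"
    then have "inv h \<circ> g \<circ> h \<in> stabilizer G x"
      using h by (auto simp: stabilizer_def permutes_inverses[OF hD]
          intro: perm_group_comp[OF G] perm_group_inv[OF G])
    moreover have "g = h \<circ> (inv h \<circ> g \<circ> h) \<circ> inv h"
      by (simp add: fun_eq_iff permutes_inverses[OF hD])
    ultimately show "g \<in> (\<lambda>g. h \<circ> g \<circ> inv h) ` stabilizer G x" by blast
  qed
qed

lemma card_stabilizer_conj:
  assumes G: "perm_group D G" and h: "h \<in> G"
  shows "card (stabilizer G (h x)) = card (stabilizer G x)"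
proof -
  have hD: "h permutes D" using perm_group_permutes[OF G h] .
  have "inv h \<circ> (h \<circ> g \<circ> inv h) \<circ> h = g" for g
    by (simp add: fun_eq_iff permutes_inverses[OF hD])
  then have "inj (\<lambda>g. h \<circ> g \<circ> inv h)" by (intro injI) metis
  then show ?thesis
    unfolding stabilizer_conj[OF assms] by (simp add: card_image inj_on_subset)
qed

lemma primitive_stabilizer_moves:
  assumes prim: "primitive D H" and not_prime_cyclic: "\<not> (\<exists>g\<in>H. H = cyc g \<and> prime (card H))"
    and xy: "x \<in> D" "y \<in> D" "x \<noteq> y"
  shows "\<exists>f\<in>H. f x = x \<and> f y \<noteq> y"
proof (rule ccontr)
  assume "\<not> (\<exists>f\<in>H. f x = x \<and> f y \<noteq> y)"
  then have sub: "stabilizer H x \<subseteq> stabilizer H y" by (auto simp: stabilizer_def)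
  have H: "perm_group D H" "transitive_on D H" "finite D"
    using prim by (auto simp: primitive_def)
  define R where "R = {(a, b). a \<in> D \<and> b \<in> D \<and> stabilizer H a = stabilizer H b}"
  have "equiv D R" by (auto simp: R_def equiv_def refl_on_def sym_def trans_def)
  moreover have "invariant_rel H R"
    using perm_group_permutes[OF H(1)] stabilizer_conj[OF H(1)]
    by (auto simp: invariant_rel_def R_def permutes_in_image)
  ultimately have "R = D \<times> D \<or> R = Id_on D" by (rule primitive_invariant_equiv[OF prim])
  then show False
  proof
    assume "R = D \<times> D"
    have "semiregular D H"
      unfolding semiregular_def
    proof (intro ballI impI)
      fix z g assume "z \<in> D" "g \<in> H" "g z = z"
      then have "g \<in> stabilizer H w" if "w \<in> D" for w
        using \<open>R = D \<times> D\<close> that by (auto simp: R_def stabilizer_def)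
      then show "g = id"
        using permutes_not_in[OF perm_group_permutes[OF H(1) \<open>g \<in> H\<close>]]
        by (force simp: stabilizer_def)
    qed
    then show False using primitive_semiregular_prime_cyclic[OF prim] not_prime_cyclic by blast
  next
    assume "R = Id_on D"
    obtain h where h: "h \<in> H" "h x = y" using H(2) xy by (auto simp: transitive_on_def)
    have "finite (stabilizer H y)"
      using finite_perm_group[OF H(1,3)] by (simp add: stabilizer_def)
    then have "stabilizer H x = stabilizer H y"
      using sub card_stabilizer_conj[OF H(1) h(1), of x] h(2) by (simp add: card_subset_eq)
    then have "(x, y) \<in> R" using xy by (simp add: R_def)
    then show False using \<open>R = Id_on D\<close> xy(3) by auto
  qed
qed

lemma mem_prod_dom: "x \<in> prod_dom D n \<longleftrightarrow> (\<forall>i<n. x i \<in> D) \<and> (\<forall>i. n \<le> i \<longrightarrow> x i = undefined)"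
  by (auto simp: prod_dom_def PiE_def extensional_def Pi_def)

lemma prod_dom_eqI:
  "x \<in> prod_dom D n \<Longrightarrow> y \<in> prod_dom D n \<Longrightarrow> (\<And>i. i < n \<Longrightarrow> x i = y i) \<Longrightarrow> x = y"
  unfolding mem_prod_dom by (metis ext not_le)

lemma fun_upd_in_prod_dom: "x \<in> prod_dom D n \<Longrightarrow> i < n \<Longrightarrow> d \<in> D \<Longrightarrow> x(i := d) \<in> prod_dom D n"
  by (auto simp: mem_prod_dom)

lemma finite_prod_dom: "finite D \<Longrightarrow> finite (prod_dom D n)"
  by (simp add: prod_dom_def finite_PiE)

lemma card_prod_dom: "finite D \<Longrightarrow> card (prod_dom D n) = card D ^ n"
  by (simp add: prod_dom_def card_PiE)

lemma permutes_less: "\<sigma> permutes {0..<(n::nat)} \<Longrightarrow> j < n \<Longrightarrow> \<sigma> j < n"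
  using permutes_in_image[of \<sigma> "{0..<n}" j] by auto

lemma permutes_inv_less: "\<sigma> permutes {0..<(n::nat)} \<Longrightarrow> j < n \<Longrightarrow> inv \<sigma> j < n"
  using permutes_less[OF permutes_inv] .

lemma wr_elem_apply:
  "x \<in> prod_dom D n \<Longrightarrow> wr_elem D n h \<sigma> x = (\<lambda>j. if j < n then h (inv \<sigma> j) (x (inv \<sigma> j)) else undefined)"
  by (simp add: wr_elem_def restrict_def)

lemma wr_elem_outside: "x \<notin> prod_dom D n \<Longrightarrow> wr_elem D n h \<sigma> x = x"
  by (simp add: wr_elem_def)

lemma wr_elem_in_prod_dom:
  assumes "\<And>i. i < n \<Longrightarrow> h i permutes D" "\<sigma> permutes {0..<n}" "x \<in> prod_dom D n"
  shows "wr_elem D n h \<sigma> x \<in> prod_dom D n"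
  using assms permutes_inv_less[OF assms(2)]
  by (auto simp: wr_elem_apply mem_prod_dom permutes_in_image)

lemma wr_elem_comp:
  assumes h': "\<And>i. i < n \<Longrightarrow> h' i permutes D" and \<sigma>: "\<sigma> permutes {0..<n}" "\<sigma>' permutes {0..<n}"
  shows "wr_elem D n h \<sigma> \<circ> wr_elem D n h' \<sigma>' = wr_elem D n (\<lambda>i. h (\<sigma>' i) \<circ> h' i) (\<sigma> \<circ> \<sigma>')"
proof
  fix x
  show "(wr_elem D n h \<sigma> \<circ> wr_elem D n h' \<sigma>') x = wr_elem D n (\<lambda>i. h (\<sigma>' i) \<circ> h' i) (\<sigma> \<circ> \<sigma>') x"
  proof (cases "x \<in> prod_dom D n")
    case True
    have y: "wr_elem D n h' \<sigma>' x \<in> prod_dom D n" by (rule wr_elem_in_prod_dom[OF h' \<sigma>(2) True])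
    have "inv (\<sigma> \<circ> \<sigma>') = inv \<sigma>' \<circ> inv \<sigma>"
      using o_inv_distrib permutes_bij \<sigma> by blast
    then show ?thesis
      using True y permutes_inv_less[OF \<sigma>(1)]
      by (auto simp: wr_elem_apply permutes_inverses[OF \<sigma>(2)] fun_eq_iff)
  qed (simp add: wr_elem_outside)
qed

lemma wr_elem_cong:
  assumes "\<sigma> permutes {0..<n}" "\<And>i x. i < n \<Longrightarrow> x \<in> D \<Longrightarrow> h i x = h' i x"
  shows "wr_elem D n h \<sigma> = wr_elem D n h' \<sigma>"
proof
  fix x show "wr_elem D n h \<sigma> x = wr_elem D n h' \<sigma> x"
    using assms permutes_inv_less[OF assms(1)]
    by (cases "x \<in> prod_dom D n") (auto simp: wr_elem_apply wr_elem_outside mem_prod_dom)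
qed

lemma wr_elem_id: "wr_elem D n (\<lambda>_. id) id = id"
proof
  fix x show "wr_elem D n (\<lambda>_. id) id x = id x"
    by (cases "x \<in> prod_dom D n") (auto simp: wr_elem_apply wr_elem_outside mem_prod_dom)
qed

lemma
  assumes h: "\<And>i. i < n \<Longrightarrow> h i permutes D" and \<sigma>: "\<sigma> permutes {0..<n}"
  shows inv_wr_elem: "inv (wr_elem D n h \<sigma>) = wr_elem D n (\<lambda>i. inv (h (inv \<sigma> i))) (inv \<sigma>)"
    and wr_elem_permutes: "wr_elem D n h \<sigma> permutes prod_dom D n"
proof -
  let ?g = "wr_elem D n h \<sigma>" and ?g' = "wr_elem D n (\<lambda>i. inv (h (inv \<sigma> i))) (inv \<sigma>)"
  have \<sigma>': "inv \<sigma> permutes {0..<n}" using permutes_inv[OF \<sigma>] .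
  have h': "inv (h (inv \<sigma> i)) permutes D" if "i < n" for i
    using permutes_inv[OF h[OF permutes_inv_less[OF \<sigma> that]]] .
  have "?g \<circ> ?g' = wr_elem D n (\<lambda>i. h (inv \<sigma> i) \<circ> inv (h (inv \<sigma> i))) id"
    using wr_elem_comp[OF h' \<sigma> \<sigma>'] permutes_inv_o(1)[OF \<sigma>] by simp
  also have "\<dots> = id"
    using permutes_inv_o(1)[OF h[OF permutes_inv_less[OF \<sigma>]]]
    by (simp add: wr_elem_cong[OF permutes_id, where h' = "\<lambda>_. id"] wr_elem_id)
  finally have right: "?g \<circ> ?g' = id" .
  have "?g' \<circ> ?g = wr_elem D n (\<lambda>i. inv (h (inv \<sigma> (\<sigma> i))) \<circ> h i) id"
    using wr_elem_comp[OF h \<sigma>' \<sigma>] permutes_inv_o(2)[OF \<sigma>] by simp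
  also have "\<dots> = id"
    using permutes_inv_o(2)[OF h]
    by (simp add: wr_elem_cong[OF permutes_id, where h' = "\<lambda>_. id"] wr_elem_id permutes_inverses[OF \<sigma>])
  finally have left: "?g' \<circ> ?g = id" .
  show "inv ?g = ?g'" using inv_unique_comp[OF right left] .
  show "?g permutes prod_dom D n"
    using o_bij[OF left right] unfolding permutes_def by (auto simp: wr_elem_outside bij_iff)
qed

lemma perm_group_wr_prod:
  assumes H: "perm_group D H" and K: "perm_group {0..<n} K"
  shows "perm_group (prod_dom D n) (wr_prod D H K n)"
  unfolding perm_group_def
proof (intro conjI ballI subsetI)
  have "wr_elem D n (\<lambda>_. id) id \<in> wr_prod D H K n"
    unfolding wr_prod_def using perm_group_id[OF H] perm_group_id[OF K] by blast
  then show "id \<in> wr_prod D H K n" by (simp add: wr_elem_id)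
  fix g assume "g \<in> wr_prod D H K n"
  then obtain h \<sigma> where g: "g = wr_elem D n h \<sigma>" "\<forall>i<n. h i \<in> H" "\<sigma> \<in> K"
    by (auto simp: wr_prod_def)
  have h: "\<And>i. i < n \<Longrightarrow> h i permutes D" using g(2) perm_group_permutes[OF H] by blast
  have \<sigma>: "\<sigma> permutes {0..<n}" using perm_group_permutes[OF K g(3)] .
  show "g \<in> {g. g permutes prod_dom D n}" using wr_elem_permutes[OF h \<sigma>] g(1) by simp
  have "\<forall>i<n. inv (h (inv \<sigma> i)) \<in> H" "inv \<sigma> \<in> K"
    using g(2,3) perm_group_inv[OF H] perm_group_inv[OF K] permutes_inv_less[OF \<sigma>] by auto
  moreover have "inv g = wr_elem D n (\<lambda>i. inv (h (inv \<sigma> i))) (inv \<sigma>)"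
    using inv_wr_elem[OF h \<sigma>] g(1) by simp
  ultimately show "inv g \<in> wr_prod D H K n" unfolding wr_prod_def by blast
  fix g' assume "g' \<in> wr_prod D H K n"
  then obtain h' \<sigma>' where g': "g' = wr_elem D n h' \<sigma>'" "\<forall>i<n. h' i \<in> H" "\<sigma>' \<in> K"
    by (auto simp: wr_prod_def)
  have h': "\<And>i. i < n \<Longrightarrow> h' i permutes D" using g'(2) perm_group_permutes[OF H] by blast
  have \<sigma>': "\<sigma>' permutes {0..<n}" using perm_group_permutes[OF K g'(3)] .
  have "\<forall>i<n. h (\<sigma>' i) \<circ> h' i \<in> H" "\<sigma> \<circ> \<sigma>' \<in> K"
    using g(2,3) g'(2,3) perm_group_comp[OF H] perm_group_comp[OF K] permutes_less[OF \<sigma>'] by auto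
  moreover have "g \<circ> g' = wr_elem D n (\<lambda>i. h (\<sigma>' i) \<circ> h' i) (\<sigma> \<circ> \<sigma>')"
    using wr_elem_comp[OF h' \<sigma> \<sigma>'] g(1) g'(1) by simp
  ultimately show "g \<circ> g' \<in> wr_prod D H K n" unfolding wr_prod_def by blast
qed

lemma wr_prod_mono: "H \<subseteq> H' \<Longrightarrow> K \<subseteq> K' \<Longrightarrow> wr_prod D H K n \<subseteq> wr_prod D H' K' n"
  unfolding wr_prod_def by blast

lemma wr_elem_base_apply:
  "x \<in> prod_dom D n \<Longrightarrow> wr_elem D n h id x = (\<lambda>j. if j < n then h j (x j) else undefined)"
  by (simp add: wr_elem_def restrict_def)

lemma wr_elem_base_in_wr_prod:
  "(\<And>i. i < n \<Longrightarrow> h i \<in> H) \<Longrightarrow> id \<in> K \<Longrightarrow> wr_elem D n h id \<in> wr_prod D H K n"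
  unfolding wr_prod_def by blast

lemma transitive_on_wr_prod:
  assumes H: "transitive_on D H" and K: "id \<in> K"
  shows "transitive_on (prod_dom D n) (wr_prod D H K n)"
  unfolding transitive_on_def
proof (intro ballI)
  fix x y assume x: "x \<in> prod_dom D n" and y: "y \<in> prod_dom D n"
  have "\<forall>i<n. \<exists>f\<in>H. f (x i) = y i"
    using H x y unfolding transitive_on_def mem_prod_dom by blast
  then obtain h where h: "\<And>i. i < n \<Longrightarrow> h i \<in> H \<and> h i (x i) = y i" by metis
  have "wr_elem D n h id x = y"
    using x y h by (intro prod_dom_eqI[OF _ y]) (auto simp: wr_elem_base_apply mem_prod_dom)
  then show "\<exists>g\<in>wr_prod D H K n. g x = y"
    using wr_elem_base_in_wr_prod[of n h H K D] h K by blast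
qed

lemma equiv_prod_dom_coordinatewise:
  assumes R: "equiv (prod_dom D n) R"
    and coord: "\<And>j u d e. j < n \<Longrightarrow> u \<in> prod_dom D n \<Longrightarrow> d \<in> D \<Longrightarrow> e \<in> D \<Longrightarrow>
      (u(j := d), u(j := e)) \<in> R"
  shows "R = prod_dom D n \<times> prod_dom D n"
proof -
  have "(u, v) \<in> R" if u: "u \<in> prod_dom D n" and v: "v \<in> prod_dom D n" for u v
  proof -
    define w where "w k = (\<lambda>l. if l < k then v l else u l)" for k
    have "k \<le> n \<longrightarrow> (u, w k) \<in> R" for k
    proof (induction k)
      case 0
      show ?case using u equiv_class_self[OF R] by (simp add: w_def)
    next
      case (Suc k)
      show ?case
      proof
        assume k: "Suc k \<le> n"
        have "w k \<in> prod_dom D n" "u k \<in> D" "v k \<in> D"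
          using u v k by (auto simp: w_def mem_prod_dom)
        then have "((w k)(k := u k), (w k)(k := v k)) \<in> R" using coord k by simp
        moreover have "(w k)(k := u k) = w k" "(w k)(k := v k) = w (Suc k)"
          by (auto simp: w_def)
        ultimately show "(u, w (Suc k)) \<in> R"
          using Suc k R by (metis Suc_leD equivE transE)
      qed
    qed
    moreover have "w n = v" using u v by (auto simp: w_def mem_prod_dom)
    ultimately show ?thesis by blast
  qed
  then show ?thesis using equiv_type[OF R] by auto
qed

lemma wr_elem_base_fun_upd:
  assumes x: "x \<in> prod_dom D n" and z: "z \<in> prod_dom D n" and "i < n" "c \<in> D"
    and agree: "\<And>j. j < n \<Longrightarrow> j \<noteq> i \<Longrightarrow> h j (x j) = z j"
  shows "wr_elem D n h id (x(i := c)) = z(i := h i c)"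
proof -
  have "x(i := c) \<in> prod_dom D n" using fun_upd_in_prod_dom assms(1,3,4) .
  then show ?thesis
    unfolding wr_elem_base_apply[OF \<open>x(i := c) \<in> prod_dom D n\<close>]
    using z agree \<open>i < n\<close> by (auto simp: mem_prod_dom)
qed

lemma wr_elem_single_fun_upd:
  "y \<in> prod_dom D n \<Longrightarrow> i < n \<Longrightarrow> c \<in> D \<Longrightarrow>
    wr_elem D n ((\<lambda>_. id)(i := f)) id (y(i := c)) = y(i := f c)"
  using wr_elem_base_fun_upd[of y D n y i c "(\<lambda>_. id)(i := f)"] by simp

lemma wr_elem_single_in_wr_prod:
  "f \<in> H \<Longrightarrow> id \<in> H \<Longrightarrow> id \<in> K \<Longrightarrow> wr_elem D n ((\<lambda>_. id)(i := f)) id \<in> wr_prod D H K n"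
  by (rule wr_elem_base_in_wr_prod) simp_all

lemma wr_invariant_equiv_coordinate_at:
  assumes prim: "primitive D H" and K: "id \<in> K"
    and R: "equiv (prod_dom D n) R" "invariant_rel (wr_prod D H K n) R"
    and i: "i < n" and y: "y \<in> prod_dom D n" and d: "d \<in> D" "d \<noteq> y i" and yd: "(y, y(i := d)) \<in> R"
    and ab: "a \<in> D" "b \<in> D"
  shows "(y(i := a), y(i := b)) \<in> R"
proof -
  have H: "perm_group D H" using prim by (simp add: primitive_def)
  obtain Rrefl: "refl_on (prod_dom D n) R" and Rsym: "sym R" and Rtrans: "trans R"
    using R(1) by (rule equivE)
  define Ri where "Ri = {(a, b). a \<in> D \<and> b \<in> D \<and> (y(i := a), y(i := b)) \<in> R}"
  have "equiv D Ri"
  proof (rule equivI)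
    show "Ri \<subseteq> D \<times> D" by (auto simp: Ri_def)
    show "refl_on D Ri"
      by (rule refl_onI) (auto simp: Ri_def intro: refl_onD[OF Rrefl] fun_upd_in_prod_dom[OF y i])
    show "sym Ri" by (rule symI) (auto simp: Ri_def intro: symD[OF Rsym])
    show "trans Ri" by (rule transI) (auto simp: Ri_def intro: transD[OF Rtrans])
  qed
  moreover have "invariant_rel H Ri"
    unfolding invariant_rel_def
  proof clarify
    fix f a b assume f: "f \<in> H" and "(a, b) \<in> Ri"
    then have ab: "a \<in> D" "b \<in> D" "(y(i := a), y(i := b)) \<in> R" by (auto simp: Ri_def)
    have "wr_elem D n ((\<lambda>_. id)(i := f)) id \<in> wr_prod D H K n"
      using wr_elem_single_in_wr_prod[OF f perm_group_id[OF H] K] .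
    from invariant_relD[OF R(2) this ab(3)]
    have "(y(i := f a), y(i := f b)) \<in> R" using wr_elem_single_fun_upd[OF y i] ab(1,2) by simp
    moreover have "f a \<in> D" "f b \<in> D"
      using ab perm_group_permutes[OF H f] by (auto simp: permutes_in_image)
    ultimately show "(f a, f b) \<in> Ri" by (simp add: Ri_def)
  qed
  ultimately have "Ri = D \<times> D \<or> Ri = Id_on D" by (rule primitive_invariant_equiv[OF prim])
  moreover have "(y i, d) \<in> Ri" using yd y i d(1) by (simp add: Ri_def mem_prod_dom)
  ultimately have "Ri = D \<times> D" using d(2) by auto
  then show ?thesis using ab by (auto simp: Ri_def)
qed

lemma wr_invariant_equiv_move_base:
  assumes H: "transitive_on D H" "id \<in> H" and K: "id \<in> K" and R: "invariant_rel (wr_prod D H K n) R"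
    and i: "i < n" and y: "y \<in> prod_dom D n" and u: "u \<in> prod_dom D n" and ab: "a \<in> D" "b \<in> D"
    and yab: "(y(i := a), y(i := b)) \<in> R"
  shows "(u(i := a), u(i := b)) \<in> R"
proof -
  have "\<exists>f. j < n \<longrightarrow> f \<in> H \<and> f (y j) = u j" for j
  proof (cases "j < n")
    case True
    then have "y j \<in> D" "u j \<in> D" using y u by (auto simp: mem_prod_dom)
    then show ?thesis using H(1) unfolding transitive_on_def by blast
  qed simp
  then obtain k where k: "\<forall>j. j < n \<longrightarrow> k j \<in> H \<and> k j (y j) = u j"
    using choice[of "\<lambda>j f. j < n \<longrightarrow> f \<in> H \<and> f (y j) = u j"] by blast
  let ?t = "wr_elem D n (k(i := id)) id"
  have "?t \<in> wr_prod D H K n" by (rule wr_elem_base_in_wr_prod[OF _ K]) (simp add: k H(2))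
  then have "(?t (y(i := a)), ?t (y(i := b))) \<in> R" by (rule invariant_relD[OF R _ yab])
  moreover have "?t (y(i := c)) = u(i := c)" if "c \<in> D" for c
    using wr_elem_base_fun_upd[OF y u i that, of "k(i := id)"] k by simp
  ultimately show ?thesis using ab by simp
qed

lemma wr_elem_top_fun_upd:
  assumes \<sigma>: "\<sigma> permutes {0..<n}" and u: "u \<in> prod_dom D n" and i: "i < n" and c: "c \<in> D"
  shows "wr_elem D n (\<lambda>_. id) \<sigma> ((\<lambda>k. if k < n then u (\<sigma> k) else undefined)(i := c)) = u(\<sigma> i := c)"
proof -
  let ?u' = "\<lambda>k. if k < n then u (\<sigma> k) else undefined"
  have "?u' \<in> prod_dom D n" using u permutes_less[OF \<sigma>] by (auto simp: mem_prod_dom)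
  then have u'c: "?u'(i := c) \<in> prod_dom D n" using i c by (rule fun_upd_in_prod_dom)
  have "inv \<sigma> l = i \<longleftrightarrow> l = \<sigma> i" for l using permutes_inv_eq[OF \<sigma>] by metis
  then show ?thesis
    unfolding wr_elem_apply[OF u'c]
    using u permutes_inv_less[OF \<sigma>] permutes_less[OF \<sigma> i]
    by (auto simp: fun_eq_iff mem_prod_dom permutes_inverses[OF \<sigma>])
qed

lemma wr_invariant_equiv_move_top:
  assumes H: "id \<in> H" and \<sigma>: "\<sigma> \<in> K" "\<sigma> permutes {0..<n}" and R: "invariant_rel (wr_prod D H K n) R"
    and i: "i < n" and coord_i: "\<And>u a b. u \<in> prod_dom D n \<Longrightarrow> a \<in> D \<Longrightarrow> b \<in> D \<Longrightarrow>
      (u(i := a), u(i := b)) \<in> R"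
    and u: "u \<in> prod_dom D n" and ab: "a \<in> D" "b \<in> D"
  shows "(u(\<sigma> i := a), u(\<sigma> i := b)) \<in> R"
proof -
  let ?u' = "\<lambda>k. if k < n then u (\<sigma> k) else undefined"
  let ?t = "wr_elem D n (\<lambda>_. id) \<sigma>"
  have "?u' \<in> prod_dom D n" using u permutes_less[OF \<sigma>(2)] by (auto simp: mem_prod_dom)
  then have "(?u'(i := a), ?u'(i := b)) \<in> R" using coord_i ab by blast
  moreover have "?t \<in> wr_prod D H K n" using \<sigma>(1) H by (auto simp: wr_prod_def)
  ultimately have "(?t (?u'(i := a)), ?t (?u'(i := b))) \<in> R" using invariant_relD[OF R] by blast
  then show ?thesis using wr_elem_top_fun_upd[OF \<sigma>(2) u i] ab by simp
qed

lemma wr_invariant_equiv_total: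
  assumes prim: "primitive D H" and not_prime_cyclic: "\<not> (\<exists>g\<in>H. H = cyc g \<and> prime (card H))"
    and K: "perm_group {0..<n} K" "transitive_on {0..<n} K"
    and R: "equiv (prod_dom D n) R" "invariant_rel (wr_prod D H K n) R"
    and xy: "(x, y) \<in> R" "x \<noteq> y"
  shows "R = prod_dom D n \<times> prod_dom D n"
proof -
  have H: "perm_group D H" "transitive_on D H" using prim by (auto simp: primitive_def)
  have id: "id \<in> H" "id \<in> K" using perm_group_id H(1) K(1) by auto
  have x: "x \<in> prod_dom D n" and y: "y \<in> prod_dom D n" using equiv_type[OF R(1)] xy(1) by auto
  obtain i where i: "i < n" "x i \<noteq> y i" using prod_dom_eqI[OF x y] xy(2) by blast
  then have "x i \<in> D" "y i \<in> D" using x y by (auto simp: mem_prod_dom)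
  then obtain f where f: "f \<in> H" "f (x i) = x i" "f (y i) \<noteq> y i"
    using primitive_stabilizer_moves[OF prim not_prime_cyclic] i(2) by blast
  have fy: "f (y i) \<in> D" using perm_group_permutes[OF H(1) f(1)] \<open>y i \<in> D\<close> by (simp add: permutes_in_image)
  have "wr_elem D n ((\<lambda>_. id)(i := f)) id \<in> wr_prod D H K n"
    using wr_elem_single_in_wr_prod[OF f(1) id] .
  from invariant_relD[OF R(2) this xy(1)]
  have "(x, y(i := f (y i))) \<in> R"
    using wr_elem_single_fun_upd[OF x i(1) \<open>x i \<in> D\<close>, of f]
      wr_elem_single_fun_upd[OF y i(1) \<open>y i \<in> D\<close>, of f] f(2) by simp
  then have "(y, y(i := f (y i))) \<in> R" using xy(1) R(1) by (metis equivE symD transD)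
  then have coord_i: "(u(i := a), u(i := b)) \<in> R" if "u \<in> prod_dom D n" "a \<in> D" "b \<in> D" for u a b
    using wr_invariant_equiv_coordinate_at[OF prim id(2) R i(1) y fy f(3)]
      wr_invariant_equiv_move_base[OF H(2) id R(2) i(1) y] that by blast
  show ?thesis
  proof (rule equiv_prod_dom_coordinatewise[OF R(1)])
    fix j u a b assume "j < n" "u \<in> prod_dom D n" "a \<in> D" "b \<in> D"
    moreover obtain \<sigma> where "\<sigma> \<in> K" "\<sigma> i = j" using K(2) i(1) \<open>j < n\<close> by (force simp: transitive_on_def)
    ultimately show "(u(j := a), u(j := b)) \<in> R"
      using wr_invariant_equiv_move_top[OF id(1) _ _ R(2) i(1) coord_i] perm_group_permutes[OF K(1)] by blast
  qed
qed

lemma primitive_wr_prod: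
  assumes prim: "primitive D H" and not_prime_cyclic: "\<not> (\<exists>g\<in>H. H = cyc g \<and> prime (card H))"
    and n: "0 < n" and K: "perm_group {0..<n} K" "transitive_on {0..<n} K"
  shows "primitive (prod_dom D n) (wr_prod D H K n)"
proof (rule primitiveI)
  have H: "finite D" "2 \<le> card D" "perm_group D H" "transitive_on D H"
    using prim by (auto simp: primitive_def)
  show "finite (prod_dom D n)" using finite_prod_dom[OF H(1)] .
  have "card D \<le> card D ^ n" using H(2) n by (simp add: self_le_power)
  then show "2 \<le> card (prod_dom D n)" using H(2) card_prod_dom[OF H(1)] by simp
  show "perm_group (prod_dom D n) (wr_prod D H K n)" using perm_group_wr_prod[OF H(3) K(1)] .
  show "transitive_on (prod_dom D n) (wr_prod D H K n)"
    using transitive_on_wr_prod[OF H(4) perm_group_id[OF K(1)]] .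
  fix R assume R: "equiv (prod_dom D n) R" "invariant_rel (wr_prod D H K n) R"
  show "R = prod_dom D n \<times> prod_dom D n \<or> R = Id_on (prod_dom D n)"
  proof (cases "\<exists>x y. (x, y) \<in> R \<and> x \<noteq> y")
    case True
    then show ?thesis using wr_invariant_equiv_total[OF prim not_prime_cyclic K R] by blast
  next
    case False
    then have "R \<subseteq> Id_on (prod_dom D n)" using equiv_type[OF R(1)] by (auto simp: Id_on_iff)
    moreover have "Id_on (prod_dom D n) \<subseteq> R" using R(1) by (auto simp: equiv_def refl_on_def)
    ultimately show ?thesis by blast
  qed
qed

definition setwise_stabilizer :: "'a set \<Rightarrow> 'a set \<Rightarrow> ('a \<Rightarrow> 'a) set" where
  "setwise_stabilizer A I = {\<sigma>. \<sigma> permutes A \<and> \<sigma> ` I = I}"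

lemma perm_group_setwise_stabilizer: "perm_group A (setwise_stabilizer A I)"
  unfolding perm_group_def setwise_stabilizer_def
proof (intro conjI ballI subsetI)
  fix \<sigma> assume "\<sigma> \<in> {\<sigma>. \<sigma> permutes A \<and> \<sigma> ` I = I}"
  then have \<sigma>: "\<sigma> permutes A" "\<sigma> ` I = I" by auto
  then show "\<sigma> \<in> {\<sigma>. \<sigma> permutes A}" by simp
  have "inv \<sigma> ` I = inv \<sigma> ` \<sigma> ` I" using \<sigma>(2) by simp
  also have "\<dots> = I" by (simp add: image_comp permutes_inv_o(2)[OF \<sigma>(1)])
  finally show "inv \<sigma> \<in> {\<sigma>. \<sigma> permutes A \<and> \<sigma> ` I = I}" using permutes_inv[OF \<sigma>(1)] by simp
  fix \<tau> assume "\<tau> \<in> {\<sigma>. \<sigma> permutes A \<and> \<sigma> ` I = I}"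
  then have "\<tau> permutes A" "(\<sigma> \<circ> \<tau>) ` I = I" using \<sigma>(2) by (auto simp only: image_comp[symmetric] mem_Collect_eq)
  then show "\<sigma> \<circ> \<tau> \<in> {\<sigma>. \<sigma> permutes A \<and> \<sigma> ` I = I}" using permutes_compose \<sigma>(1) by blast
qed (auto simp: permutes_id)

definition coord_fiber :: "'a set \<Rightarrow> nat \<Rightarrow> nat set \<Rightarrow> (nat \<Rightarrow> 'a) \<Rightarrow> (nat \<Rightarrow> 'a) set" where
  "coord_fiber D n I a = {x \<in> prod_dom D n. \<forall>i\<in>I. x i = a i}"

lemma coord_fiber_eq_PiE:
  assumes "a \<in> prod_dom D n" "I \<subseteq> {0..<n}"
  shows "coord_fiber D n I a = PiE {0..<n} (\<lambda>i. if i \<in> I then {a i} else D)"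
  using assms by (auto simp: coord_fiber_def prod_dom_def PiE_iff extensional_def split: if_splits)

lemma card_coord_fiber:
  assumes "finite D" "a \<in> prod_dom D n" "I \<subseteq> {0..<n}"
  shows "card (coord_fiber D n I a) = card D ^ (n - card I)"
proof -
  have "card (coord_fiber D n I a) = (\<Prod>i\<in>{0..<n}. if i \<in> I then 1 else card D)"
    unfolding coord_fiber_eq_PiE[OF assms(2,3)] card_PiE[OF finite_atLeastLessThan]
    by (intro prod.cong) auto
  also have "\<dots> = card D ^ card ({0..<n} - I)"
    using assms(3) by (simp add: prod.If_cases Int_absorb2 flip: Diff_eq)
  also have "card ({0..<n} - I) = n - card I"
    using assms(3) by (simp add: card_Diff_subset finite_subset)
  finally show ?thesis .
qed

lemma partition_coord_fibers: "is_partition (prod_dom D n) (coord_fiber D n I ` prod_dom D n)"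
  unfolding is_partition_def
proof (intro conjI ballI impI)
  show "\<Union> (coord_fiber D n I ` prod_dom D n) = prod_dom D n" by (auto simp: coord_fiber_def)
  show "{} \<notin> coord_fiber D n I ` prod_dom D n" by (auto simp: coord_fiber_def)
  fix B C assume "B \<in> coord_fiber D n I ` prod_dom D n" "C \<in> coord_fiber D n I ` prod_dom D n" "B \<noteq> C"
  then show "B \<inter> C = {}" by (auto simp: coord_fiber_def)
qed

lemma wr_elem_image_coord_fiber:
  assumes D: "finite D" and h: "\<And>i. i < n \<Longrightarrow> h i permutes D"
    and \<sigma>: "\<sigma> \<in> setwise_stabilizer {0..<n} I" and I: "I \<subseteq> {0..<n}" and a: "a \<in> prod_dom D n"
  shows "wr_elem D n h \<sigma> ` coord_fiber D n I a = coord_fiber D n I (wr_elem D n h \<sigma> a)"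
proof (rule card_subset_eq)
  let ?g = "wr_elem D n h \<sigma>"
  have \<sigma>': "\<sigma> permutes {0..<n}" "\<sigma> ` I = I" using \<sigma> by (auto simp: setwise_stabilizer_def)
  have gD: "?g permutes prod_dom D n" using wr_elem_permutes[OF h \<sigma>'(1)] .
  have ga: "?g a \<in> prod_dom D n" using wr_elem_in_prod_dom[OF h \<sigma>'(1) a] .
  show "finite (coord_fiber D n I (?g a))"
    using finite_prod_dom[OF D] unfolding coord_fiber_def by simp
  have inv_I: "inv \<sigma> j \<in> I" if j: "j \<in> I" for j
  proof -
    obtain k where "k \<in> I" "j = \<sigma> k" using j \<sigma>'(2) by blast
    then show ?thesis by (simp add: permutes_inverses(2)[OF \<sigma>'(1)])
  qed
  show "?g ` coord_fiber D n I a \<subseteq> coord_fiber D n I (?g a)"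
  proof
    fix z assume "z \<in> ?g ` coord_fiber D n I a"
    then obtain x where x: "x \<in> prod_dom D n" "\<forall>i\<in>I. x i = a i" and z: "z = ?g x"
      by (auto simp: coord_fiber_def)
    have "z \<in> prod_dom D n" unfolding z using wr_elem_in_prod_dom[OF h \<sigma>'(1) x(1)] .
    moreover have "z j = ?g a j" if "j \<in> I" for j
      using x(2) inv_I[OF that] I that unfolding z wr_elem_apply[OF x(1)] wr_elem_apply[OF a] by auto
    ultimately show "z \<in> coord_fiber D n I (?g a)" by (simp add: coord_fiber_def)
  qed
  have "coord_fiber D n I a \<subseteq> prod_dom D n" by (auto simp: coord_fiber_def)
  then have "inj_on ?g (coord_fiber D n I a)" using permutes_inj_on[OF gD] inj_on_subset by blast
  then have "card (?g ` coord_fiber D n I a) = card (coord_fiber D n I a)" by (rule card_image)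
  then show "card (?g ` coord_fiber D n I a) = card (coord_fiber D n I (?g a))"
    using card_coord_fiber[OF D a I] card_coord_fiber[OF D ga I] by simp
qed

lemma preserves_nontrivial_partition_setwise_stabilizer:
  assumes D: "finite D" "2 \<le> card D" and I: "I \<subseteq> {0..<n}" "I \<noteq> {}" "I \<noteq> {0..<n}"
    and G: "G \<subseteq> wr_prod D {h. h permutes D} (setwise_stabilizer {0..<n} I) n"
  shows "preserves_nontrivial_partition (prod_dom D n) G"
  unfolding preserves_nontrivial_partition_def
proof (intro exI conjI)
  let ?P = "coord_fiber D n I ` prod_dom D n"
  show "is_partition (prod_dom D n) ?P" by (rule partition_coord_fibers)
  show "\<forall>B\<in>?P. card B = card D ^ (n - card I)" using card_coord_fiber[OF D(1) _ I(1)] by blast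
  have "card I < n" "0 < card I"
    using psubset_card_mono[of "{0..<n}" I] I finite_subset[OF I(1)] by auto
  then show "1 < card D ^ (n - card I)" using D(2) by (intro one_less_power) auto
  show "card D ^ (n - card I) < card (prod_dom D n)"
    using D \<open>card I < n\<close> \<open>0 < card I\<close> by (simp add: card_prod_dom power_strict_increasing)
  show "preserves G ?P"
    unfolding preserves_def
  proof (intro ballI)
    fix g B assume "g \<in> G" "B \<in> ?P"
    then obtain a where a: "a \<in> prod_dom D n" "B = coord_fiber D n I a" by blast
    have "g \<in> wr_prod D {h. h permutes D} (setwise_stabilizer {0..<n} I) n" using G \<open>g \<in> G\<close> ..
    then obtain h \<sigma> where g: "g = wr_elem D n h \<sigma>" and h: "\<And>i. i < n \<Longrightarrow> h i permutes D"
      and \<sigma>: "\<sigma> \<in> setwise_stabilizer {0..<n} I"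
      unfolding wr_prod_def by blast
    have "g a \<in> prod_dom D n"
      unfolding g using h \<sigma> a(1) by (intro wr_elem_in_prod_dom) (auto simp: setwise_stabilizer_def)
    moreover have "g ` B = coord_fiber D n I (g a)"
      unfolding g a(2) using wr_elem_image_coord_fiber[OF D(1) h \<sigma> I(1) a(1)] .
    ultimately show "g ` B \<in> ?P" by blast
  qed
qed

lemma image_orbit_permutation:
  assumes f: "permutation f"
  shows "f ` orbit f x = orbit f x"
proof -
  have "f ` orbit f x = orbit f (f x)"
    unfolding orbit_altdef_permutation[OF f] by (auto simp flip: funpow_swap1)
  also have "\<dots> = orbit f x" by (rule permutation_orbit_step[OF f])
  finally show ?thesis .
qed

lemma wr_prod_elem_imprimitive:
  assumes D: "finite D" "2 \<le> card D" and H: "perm_group D H" and K: "perm_group {0..<n} K"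
    and intransitive: "\<forall>\<sigma>\<in>K. \<not> transitive_on {0..<n} (cyc \<sigma>)" and g: "g \<in> wr_prod D H K n"
  shows "imprimitive_perm (prod_dom D n) g"
proof -
  obtain h \<sigma> where g': "g = wr_elem D n h \<sigma>" "\<forall>i<n. h i \<in> H" "\<sigma> \<in> K"
    using g by (auto simp: wr_prod_def)
  have \<sigma>: "\<sigma> permutes {0..<n}" using perm_group_permutes[OF K g'(3)] .
  then have perm: "permutation \<sigma>" by (auto simp: permutation_permutes)
  have "\<not> transitive_on {0..<n} (cyc \<sigma>)" using intransitive g'(3) by blast
  then obtain i j where ij: "i < n" "j < n" "\<forall>f\<in>cyc \<sigma>. f i \<noteq> j"
    unfolding transitive_on_def by auto
  then have "j \<notin> orbit \<sigma> i" by (auto simp: cyc_def orbit_altdef_permutation[OF perm])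
  let ?I = "orbit \<sigma> i"
  have I: "?I \<subseteq> {0..<n}" "?I \<noteq> {}" "?I \<noteq> {0..<n}"
    using permutes_orbit_subset[OF \<sigma>] ij(1,2) \<open>j \<notin> orbit \<sigma> i\<close> orbit_nonempty[of \<sigma> i] by auto
  have "\<sigma> \<in> setwise_stabilizer {0..<n} ?I"
    using \<sigma> image_orbit_permutation[OF perm] by (simp add: setwise_stabilizer_def)
  then have "{g} \<subseteq> wr_prod D {f. f permutes D} (setwise_stabilizer {0..<n} ?I) n"
    using g' perm_group_permutes[OF H] by (auto simp: wr_prod_def)
  then show ?thesis
    unfolding imprimitive_perm_def by (rule preserves_nontrivial_partition_setwise_stabilizer[OF D I])
qed

lemma primitive_not_preserves_nontrivial_partition:
  assumes "primitive D G"
  shows "\<not> preserves_nontrivial_partition D G"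
proof
  assume "preserves_nontrivial_partition D G"
  then obtain P b where P: "is_partition D P" "\<forall>B\<in>P. card B = b" "1 < b" "b < card D" "preserves G P"
    unfolding preserves_nontrivial_partition_def by blast
  then have "P \<noteq> {}" by (auto simp: is_partition_def)
  moreover have "P = {D} \<or> (\<forall>B\<in>P. card B = 1)" using assms P(1,5) by (simp add: primitive_def)
  ultimately show False using P(2-4) by auto
qed

lemma primitive_permutations:
  assumes "finite D" "2 \<le> card D"
  shows "primitive D {f. f permutes D}"
proof (rule primitiveI[OF assms perm_group_permutations])
  show "transitive_on D {f. f permutes D}"
    unfolding transitive_on_def
  proof (intro ballI)
    fix x y assume "x \<in> D" "y \<in> D"
    then have "transpose x y permutes D" by (rule permutes_swap_id)
    then show "\<exists>g\<in>{f. f permutes D}. g x = y" by force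
  qed
  fix R assume R: "equiv D R" "invariant_rel {f. f permutes D} R"
  show "R = D \<times> D \<or> R = Id_on D"
  proof (cases "\<exists>x y. (x, y) \<in> R \<and> x \<noteq> y")
    case True
    then obtain x y where xy: "(x, y) \<in> R" "x \<noteq> y" by blast
    have "(x, z) \<in> R" if z: "z \<in> D" for z
    proof (cases "z = x")
      case True then show ?thesis using z R(1) by (simp add: equiv_def refl_on_def)
    next
      case False
      have "y \<in> D" using equiv_type[OF R(1)] xy(1) by blast
      then have "transpose y z permutes D" using z by (rule permutes_swap_id)
      then have "(transpose y z x, transpose y z y) \<in> R" using invariant_relD[OF R(2) _ xy(1)] by blast
      moreover have "transpose y z x = x" using xy(2) False by (simp add: transpose_def)
      ultimately show ?thesis by simp
    qed
    moreover obtain "sym R" "trans R" using R(1) by (rule equivE)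
    ultimately have "(a, b) \<in> R" if "a \<in> D" "b \<in> D" for a b
      using symD[of R x a] transD[of R a x b] that by blast
    then have "R = D \<times> D" using equiv_type[OF R(1)] by auto
    then show ?thesis ..
  next
    case False
    then have "R \<subseteq> Id_on D" using equiv_type[OF R(1)] by (auto simp: Id_on_iff)
    moreover have "Id_on D \<subseteq> R" using R(1) by (auto simp: equiv_def refl_on_def)
    ultimately show ?thesis by blast
  qed
qed

definition xor_perm :: "nat \<Rightarrow> nat \<Rightarrow> nat \<Rightarrow> nat" where
  "xor_perm m v = (\<lambda>i. if i < 2 ^ m then xor i v else i)"

lemma xor_less_power2: "(x::nat) < 2 ^ m \<Longrightarrow> y < 2 ^ m \<Longrightarrow> xor x y < 2 ^ m"
  by (metis take_bit_nat_eq_self_iff take_bit_nat_less_exp take_bit_xor)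

lemma xor_perm_comp: "v < 2 ^ m \<Longrightarrow> w < 2 ^ m \<Longrightarrow> xor_perm m v \<circ> xor_perm m w = xor_perm m (xor w v)"
  by (auto simp: xor_perm_def fun_eq_iff xor_less_power2 xor.assoc)

lemma xor_perm_involution: "v < 2 ^ m \<Longrightarrow> xor_perm m v \<circ> xor_perm m v = id"
  by (auto simp: xor_perm_def fun_eq_iff xor_less_power2 xor.assoc)

lemma xor_perm_permutes: "v < 2 ^ m \<Longrightarrow> xor_perm m v permutes {0..<2 ^ m}"
  using o_bij[OF xor_perm_involution xor_perm_involution]
  by (auto simp: permutes_def xor_perm_def bij_iff)

lemma C2pow_eq: "C2pow m = {xor_perm m v | v. v < 2 ^ m}"
  by (simp add: C2pow_def xor_perm_def)

lemma perm_group_C2pow: "perm_group {0..<2 ^ m} (C2pow m)"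
  unfolding perm_group_def C2pow_eq
proof (intro conjI ballI subsetI)
  have "id = xor_perm m 0" by (simp add: xor_perm_def fun_eq_iff)
  then show "id \<in> {xor_perm m v |v. v < 2 ^ m}" by auto
  fix g assume "g \<in> {xor_perm m v |v. v < 2 ^ m}"
  then obtain v where v: "g = xor_perm m v" "v < 2 ^ m" by blast
  then show "g \<in> {g. g permutes {0..<2 ^ m}}" using xor_perm_permutes by simp
  show "inv g \<in> {xor_perm m v |v. v < 2 ^ m}"
    using inv_unique_comp[OF xor_perm_involution xor_perm_involution] v by blast
  fix g' assume "g' \<in> {xor_perm m v |v. v < 2 ^ m}"
  then obtain w where w: "g' = xor_perm m w" "w < 2 ^ m" by blast
  then show "g \<circ> g' \<in> {xor_perm m v |v. v < 2 ^ m}"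
    using xor_perm_comp[OF v(2) w(2)] xor_less_power2[OF w(2) v(2)] v(1) by blast
qed

lemma transitive_on_C2pow: "transitive_on {0..<2 ^ m} (C2pow m)"
  unfolding transitive_on_def C2pow_eq
proof (intro ballI)
  fix x y :: nat assume "x \<in> {0..<2 ^ m}" "y \<in> {0..<2 ^ m}"
  then have xy: "x < 2 ^ m" "y < 2 ^ m" by auto
  then have "xor_perm m (xor x y) x = y" by (simp add: xor_perm_def xor.assoc[symmetric])
  then show "\<exists>g\<in>{xor_perm m v |v. v < 2 ^ m}. g x = y" using xor_less_power2[OF xy] by blast
qed

text \<open>Numbers below \<open>2\<^sup>m\<close> encode \<open>F\<^sub>2\<^sup>m\<close> with \<open>xor\<close> as addition; \<open>xor_span V\<close> is the span of \<open>V\<close>.\<close>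

inductive_set xor_span :: "nat set \<Rightarrow> nat set" for V where
  zero: "0 \<in> xor_span V"
| xor: "x \<in> xor_span V \<Longrightarrow> v \<in> V \<Longrightarrow> xor x v \<in> xor_span V"

lemma xor_span_less:
  assumes "\<And>v. v \<in> V \<Longrightarrow> v < 2 ^ m" "x \<in> xor_span V"
  shows "x < 2 ^ m"
  using assms(2) by induction (use assms(1) xor_less_power2 in auto)

lemma xor_span_insert: "xor_span (insert v V) \<subseteq> xor_span V \<union> (\<lambda>x. xor x v) ` xor_span V"
proof
  fix x assume "x \<in> xor_span (insert v V)"
  then show "x \<in> xor_span V \<union> (\<lambda>x. xor x v) ` xor_span V"
  proof induction
    case zero then show ?case by (simp add: xor_span.zero)
  next
    case (xor x w)
    consider "w = v" | "w \<in> V" using xor.hyps(2) by blast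
    then show ?case
    proof cases
      case 1 then show ?thesis using xor.IH by (auto simp: xor.assoc)
    next
      case 2
      have "xor (xor y v) w = xor (xor y w) v" for y by (metis xor.assoc xor.commute)
      then show ?thesis using xor.IH xor_span.xor[OF _ 2] by auto
    qed
  qed
qed

lemma card_xor_span_le: "finite V \<Longrightarrow> finite (xor_span V) \<and> card (xor_span V) \<le> 2 ^ card V"
proof (induction V rule: finite_induct)
  case empty
  have "xor_span {} = {0}" by (auto elim: xor_span.cases intro: xor_span.zero)
  then show ?case by simp
next
  case (insert v V)
  let ?U = "xor_span V \<union> (\<lambda>x. xor x v) ` xor_span V"
  have fin: "finite (xor_span V)" using insert.IH by simp
  have "card ?U \<le> card (xor_span V) + card ((\<lambda>x. xor x v) ` xor_span V)" by (rule card_Un_le)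
  also have "\<dots> \<le> 2 * card (xor_span V)" using card_image_le[OF fin] by simp
  also have "\<dots> \<le> 2 ^ card (insert v V)" using insert by simp
  finally have "card ?U \<le> 2 ^ card (insert v V)" .
  moreover have "finite ?U" using fin by simp
  ultimately show ?case using xor_span_insert card_mono finite_subset by (metis order_trans)
qed

lemma xor_perm_image_xor_span:
  assumes V: "\<And>w. w \<in> V \<Longrightarrow> w < 2 ^ m" and v: "v \<in> V"
  shows "xor_perm m v ` xor_span V = xor_span V"
proof -
  have "xor_perm m v x \<in> xor_span V" if "x \<in> xor_span V" for x
    using that xor_span.xor[OF that v] xor_span_less[OF V that] by (simp add: xor_perm_def)
  moreover have "x = xor_perm m v (xor_perm m v x)" for x
    using xor_perm_involution[OF V[OF v]] by (metis comp_apply id_apply)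
  ultimately show ?thesis by (metis image_eqI subsetI subset_antisym image_subsetI)
qed

lemma gen_by_few_preserves_nontrivial_partition:
  assumes D: "finite D" "2 \<le> card D" and H: "perm_group D H"
    and S: "S \<subseteq> wr_prod D H (C2pow m) (2 ^ m)" "finite S" "card S < m"
  shows "preserves_nontrivial_partition (prod_dom D (2 ^ m)) (gen_by S)"
proof -
  have "\<forall>s\<in>S. \<exists>v. v < 2 ^ m \<and> (\<exists>h. (\<forall>i<2 ^ m. h i \<in> H) \<and> s = wr_elem D (2 ^ m) h (xor_perm m v))"
    using S(1) unfolding wr_prod_def C2pow_eq by blast
  then obtain shift where shift: "\<forall>s\<in>S. shift s < 2 ^ m \<and>
      (\<exists>h. (\<forall>i<2 ^ m. h i \<in> H) \<and> s = wr_elem D (2 ^ m) h (xor_perm m (shift s)))"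
    by (rule bchoice[THEN exE])
  define I where "I = xor_span (shift ` S)"
  have V: "\<And>w. w \<in> shift ` S \<Longrightarrow> w < 2 ^ m" using shift by blast
  have "card (shift ` S) < m" using card_image_le[OF S(2), of shift] S(3) by simp
  have "card I \<le> 2 ^ card (shift ` S)" using card_xor_span_le S(2) unfolding I_def by simp
  also have "\<dots> < 2 ^ m" using \<open>card (shift ` S) < m\<close> by simp
  finally have "card I < 2 ^ m" .
  then have I: "I \<subseteq> {0..<2 ^ m}" "I \<noteq> {}" "I \<noteq> {0..<2 ^ m}"
    using xor_span_less[OF V] xor_span.zero unfolding I_def by fastforce+
  have "xor_perm m (shift s) \<in> setwise_stabilizer {0..<2 ^ m} I" if "s \<in> S" for s
    using xor_perm_permutes xor_perm_image_xor_span[OF V] shift that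
    unfolding setwise_stabilizer_def I_def by blast
  then have "S \<subseteq> wr_prod D H (setwise_stabilizer {0..<2 ^ m} I) (2 ^ m)"
    using shift unfolding wr_prod_def by blast
  then have "gen_by S \<subseteq> wr_prod D H (setwise_stabilizer {0..<2 ^ m} I) (2 ^ m)"
    by (rule gen_by_least[OF perm_group_wr_prod[OF H perm_group_setwise_stabilizer]])
  also have "\<dots> \<subseteq> wr_prod D {h. h permutes D} (setwise_stabilizer {0..<2 ^ m} I) (2 ^ m)"
    using perm_group_permutes[OF H] by (intro wr_prod_mono) auto
  finally show ?thesis by (rule preserves_nontrivial_partition_setwise_stabilizer[OF D I])
qed

lemma perm_group_S3: "perm_group {0..<3} S3"
  unfolding S3_def by (rule perm_group_permutations)

lemma primitive_S3: "primitive {0..<3} S3"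
  unfolding S3_def by (rule primitive_permutations) simp_all

lemma S3_not_prime_cyclic: "\<not> (\<exists>g\<in>S3. S3 = cyc g \<and> prime (card S3))"
proof -
  have "card S3 = 2 * 3" unfolding S3_def by (simp add: card_permutations fact_numeral)
  then show ?thesis using prime_product[of 2 3] by simp
qed

theorem mainTheorem17:
  shows "(\<forall>(D::'a set) H (K::(nat \<Rightarrow> nat) set) n.
           primitive D H \<and> \<not> (\<exists>g\<in>H. H = cyc g \<and> prime (card H)) \<and>
           2 \<le> n \<and> perm_group {0..<n} K \<and> transitive_on {0..<n} K \<and>
           (\<forall>\<sigma>\<in>K. \<not> transitive_on {0..<n} (cyc \<sigma>))
         \<longrightarrow> primitive (prod_dom D n) (wr_prod D H K n) \<and>
             (\<forall>g\<in>wr_prod D H K n. imprimitive_perm (prod_dom D n) g))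
       \<and>
       (\<forall>m::nat. 1 \<le> m \<longrightarrow>
          (let \<Omega> = prod_dom {0..<3::nat} (2^m); G = wr_prod {0..<3} S3 (C2pow m) (2^m) in
            primitive \<Omega> G \<and> card \<Omega> = 3^(2^m) \<and>
            (\<forall>S. S \<subseteq> G \<and> finite S \<and> card S < m \<longrightarrow> preserves_nontrivial_partition \<Omega> (gen_by S)) \<and>
            (\<forall>S. S \<subseteq> G \<and> finite S \<and> primitive \<Omega> (gen_by S) \<longrightarrow> m \<le> card S)))"
proof (rule conjI; intro allI impI; (elim conjE)?)
  fix D :: "'a set" and H K and n :: nat
  assume prim: "primitive D H" and not_prime_cyclic: "\<not> (\<exists>g\<in>H. H = cyc g \<and> prime (card H))"
    and n: "2 \<le> n" and K: "perm_group {0..<n} K" "transitive_on {0..<n} K"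
    and intransitive: "\<forall>\<sigma>\<in>K. \<not> transitive_on {0..<n} (cyc \<sigma>)"
  have D: "finite D" "2 \<le> card D" and H: "perm_group D H" using prim by (auto simp: primitive_def)
  show "primitive (prod_dom D n) (wr_prod D H K n) \<and>
      (\<forall>g\<in>wr_prod D H K n. imprimitive_perm (prod_dom D n) g)"
    using primitive_wr_prod[OF prim not_prime_cyclic _ K] n
      wr_prod_elem_imprimitive[OF D H K(1) intransitive] by simp
next
  fix m :: nat
  let ?\<Omega> = "prod_dom {0..<3::nat} (2 ^ m)" and ?G = "wr_prod {0..<3} S3 (C2pow m) (2 ^ m)"
  have "primitive ?\<Omega> ?G"
    using primitive_wr_prod[OF primitive_S3 S3_not_prime_cyclic _ perm_group_C2pow transitive_on_C2pow] by simp
  moreover have "preserves_nontrivial_partition ?\<Omega> (gen_by S)"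
    if "S \<subseteq> ?G" "finite S" "card S < m" for S
    using gen_by_few_preserves_nontrivial_partition[OF _ _ perm_group_S3 that] by simp
  ultimately show "let \<Omega> = ?\<Omega>; G = ?G in primitive \<Omega> G \<and> card \<Omega> = 3 ^ 2 ^ m \<and>
      (\<forall>S. S \<subseteq> G \<and> finite S \<and> card S < m \<longrightarrow> preserves_nontrivial_partition \<Omega> (gen_by S)) \<and>
      (\<forall>S. S \<subseteq> G \<and> finite S \<and> primitive \<Omega> (gen_by S) \<longrightarrow> m \<le> card S)"
    using primitive_not_preserves_nontrivial_partition by (auto simp: card_prod_dom not_le[symmetric])
qed

end
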